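(* Let $G$ be a finite group, $K$ an idempotent semifield, and $V$ an indecomposable representation of $G$ over $K$. Let $K[G]$ be the regular representation. Then there is a subgroup $H\subseteq G$ such that $V$ is isomorphic (as a representation) to the quotient of $K[G]$ by the $K[G]$-module congruence generated by $g\sim gh$ for all $g\in G$, $h\in H$.
   Context: All semirings are commutative. A semifield is a semiring whose nonzero elements form a multiplicative group; idempotent means $a+a=a$ for all $a$. A representation of $G$ over $K$ is a $K$-linear action of $G$ on a free module $K^n$ (equivalently a $K[G]$-module that is free of finite rank over $K$); it is indecomposable if it is not a direct sum of two nontrivial $G$-stable submodules. The regular representation is the group semiring $K[G]$ viewed as a module over itself. *)

theory Defs
  imports "HOL-Algebra.Group"
begin

class idem_semifield = comm_semiring_1 +
  assumes add_idem: "a + a = a"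
  and mult_inverse_ex: "a \<noteq> 0 \<Longrightarrow> \<exists>b. a * b = 1"

text \<open>Vectors of the free module K^n are functions from a finite index type to K.\<close>
definition vadd :: "('i \<Rightarrow> 'k::plus) \<Rightarrow> ('i \<Rightarrow> 'k) \<Rightarrow> ('i \<Rightarrow> 'k)" where
  "vadd u w = (\<lambda>i. u i + w i)"

definition vsmult :: "'k::times \<Rightarrow> ('i \<Rightarrow> 'k) \<Rightarrow> ('i \<Rightarrow> 'k)" where
  "vsmult c u = (\<lambda>i. c * u i)"

definition klinear :: "(('i \<Rightarrow> 'k::semiring_1) \<Rightarrow> ('j \<Rightarrow> 'k)) \<Rightarrow> bool" where
  "klinear f \<longleftrightarrow> (\<forall>u w. f (vadd u w) = vadd (f u) (f w)) \<and>
                  (\<forall>c u. f (vsmult c u) = vsmult c (f u))"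

definition is_rep :: "('g, 'b) monoid_scheme \<Rightarrow>
    ('g \<Rightarrow> ('n::finite \<Rightarrow> 'k::semiring_1) \<Rightarrow> ('n \<Rightarrow> 'k)) \<Rightarrow> bool" where
  "is_rep G \<rho> \<longleftrightarrow> (\<forall>g\<in>carrier G. klinear (\<rho> g)) \<and>
     (\<forall>v. \<rho> \<one>\<^bsub>G\<^esub> v = v) \<and>
     (\<forall>g\<in>carrier G. \<forall>h\<in>carrier G. \<forall>v. \<rho> (g \<otimes>\<^bsub>G\<^esub> h) v = \<rho> g (\<rho> h v))"

definition is_submodule :: "('n \<Rightarrow> 'k::semiring_1) set \<Rightarrow> bool" where
  "is_submodule U \<longleftrightarrow> (\<lambda>_. 0) \<in> U \<and> (\<forall>u\<in>U. \<forall>w\<in>U. vadd u w \<in> U) \<and>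
     (\<forall>c. \<forall>u\<in>U. vsmult c u \<in> U)"

definition G_stable :: "('g, 'b) monoid_scheme \<Rightarrow>
    ('g \<Rightarrow> ('n \<Rightarrow> 'k) \<Rightarrow> ('n \<Rightarrow> 'k)) \<Rightarrow> ('n \<Rightarrow> 'k) set \<Rightarrow> bool" where
  "G_stable G \<rho> U \<longleftrightarrow> (\<forall>g\<in>carrier G. \<forall>u\<in>U. \<rho> g u \<in> U)"

definition indecomposable :: "('g, 'b) monoid_scheme \<Rightarrow>
    ('g \<Rightarrow> ('n::finite \<Rightarrow> 'k::semiring_1) \<Rightarrow> ('n \<Rightarrow> 'k)) \<Rightarrow> bool" where
  "indecomposable G \<rho> \<longleftrightarrow>
     \<not> (\<exists>U W. is_submodule U \<and> is_submodule W \<and> G_stable G \<rho> U \<and> G_stable G \<rho> W \<and>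
            U \<noteq> {\<lambda>_. 0} \<and> W \<noteq> {\<lambda>_. 0} \<and>
            (\<forall>v. \<exists>u\<in>U. \<exists>w\<in>W. v = vadd u w) \<and>
            (\<forall>u\<in>U. \<forall>u'\<in>U. \<forall>w\<in>W. \<forall>w'\<in>W. vadd u w = vadd u' w' \<longrightarrow> u = u' \<and> w = w'))"

text \<open>The group semiring K[G] as K-valued functions supported on carrier G.\<close>
definition group_alg :: "('g, 'b) monoid_scheme \<Rightarrow> ('g \<Rightarrow> 'k::zero) set" where
  "group_alg G = {f. \<forall>x. x \<notin> carrier G \<longrightarrow> f x = 0}"

definition basis_elt :: "'g \<Rightarrow> ('g \<Rightarrow> 'k::{zero,one})" where
  "basis_elt g = (\<lambda>x. if x = g then 1 else 0)"

text \<open>Left regular action: g \<cdot> (\<Sum> a_x x) = \<Sum> a_x (g x).\<close>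
definition reg_act :: "('g, 'b) monoid_scheme \<Rightarrow> 'g \<Rightarrow> ('g \<Rightarrow> 'k::zero) \<Rightarrow> ('g \<Rightarrow> 'k)" where
  "reg_act G g f = (\<lambda>x. if x \<in> carrier G then f (inv\<^bsub>G\<^esub> g \<otimes>\<^bsub>G\<^esub> x) else 0)"

text \<open>The K[G]-module congruence on K[G] generated by g \<sim> g h (g \<in> G, h \<in> H):
  the least equivalence relation on K[G] containing these pairs and compatible with
  addition, K-scalars and the G-action (hence with multiplication by K[G]).\<close>
inductive coset_cong :: "('g, 'b) monoid_scheme \<Rightarrow> 'g set \<Rightarrow>
    ('g \<Rightarrow> 'k::semiring_1) \<Rightarrow> ('g \<Rightarrow> 'k) \<Rightarrow> bool"
  for G H where
  gen: "g \<in> carrier G \<Longrightarrow> h \<in> H \<Longrightarrow> coset_cong G H (basis_elt g) (basis_elt (g \<otimes>\<^bsub>G\<^esub> h))"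
| refl: "f \<in> group_alg G \<Longrightarrow> coset_cong G H f f"
| sym: "coset_cong G H f f' \<Longrightarrow> coset_cong G H f' f"
| trans: "coset_cong G H f f' \<Longrightarrow> coset_cong G H f' f'' \<Longrightarrow> coset_cong G H f f''"
| add: "coset_cong G H f f' \<Longrightarrow> e \<in> group_alg G \<Longrightarrow> coset_cong G H (vadd f e) (vadd f' e)"
| smult: "coset_cong G H f f' \<Longrightarrow> coset_cong G H (vsmult c f) (vsmult c f')"
| act: "coset_cong G H f f' \<Longrightarrow> g \<in> carrier G \<Longrightarrow>
        coset_cong G H (reg_act G g f) (reg_act G g f')"

end

theory Submission
  imports Defs "HOL-Algebra.Multiplicative_Group"
begin

text \<open>An idempotent semifield \<open>K\<close> is zero-sum free and has no zero divisors, so every invertible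
  \<open>K\<close>-linear map of \<open>K\<^sup>n\<close> is monomial, and \<open>G\<close> acts by \<open>g e\<^sub>i = c\<^sub>g\<^sub>,\<^sub>i e\<^bsub>\<pi>\<^sub>g i\<^esub>\<close>.
  The coordinate subspaces of a \<open>\<pi>\<close>-orbit and of its complement are \<open>G\<close>-stable, so
  indecomposability makes \<open>\<pi>\<close> transitive. Since \<open>K\<close> has no roots of unity other than \<open>1\<close>,
  an element fixing the index \<open>i\<^sub>0\<close> fixes the vector \<open>e\<^bsub>i\<^sub>0\<^esub>\<close>. With \<open>H\<close> the stabiliser of
  \<open>e\<^bsub>i\<^sub>0\<^esub>\<close>, the module map \<open>K[G] \<rightarrow> V\<close>, \<open>g \<mapsto> g e\<^bsub>i\<^sub>0\<^esub>\<close>, is onto and identifies \<open>g\<close> with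
  \<open>g h\<close>; conversely every \<open>f\<close> is congruent to a normal form supported on a transversal of
  \<open>G/H\<close>, and on such functions the map is injective.\<close>

section \<open>Idempotent semifields\<close>

context idem_semifield
begin

subclass semiring_1_no_zero_divisors
proof
  fix a b :: 'a
  assume "a \<noteq> 0" "b \<noteq> 0"
  then obtain a' where "a * a' = 1" using mult_inverse_ex by blast
  show "a * b \<noteq> 0"
  proof
    assume "a * b = 0"
    then have "b = (a * a') * b" using \<open>a * a' = 1\<close> by simp
    also have "\<dots> = 0" using \<open>a * b = 0\<close> by (simp add: mult.commute mult.left_commute)
    finally show False using \<open>b \<noteq> 0\<close> by simp
  qed
qed

lemma sf_add_eq_0_iff [simp]: "a + b = 0 \<longleftrightarrow> a = 0 \<and> b = 0"
proof
  assume sum: "a + b = 0"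
  have "a = a + (a + b)" using sum by simp
  also have "\<dots> = a + b" by (simp add: add.assoc[symmetric] add_idem)
  also have "\<dots> = 0" by (rule sum)
  finally have "a = 0" .
  with sum show "a = 0 \<and> b = 0" by simp
qed simp

lemma sf_sum_eq_0_iff:
  "finite S \<Longrightarrow> sum f S = 0 \<longleftrightarrow> (\<forall>x\<in>S. f x = 0)"
  by (induction S rule: finite_induct) simp_all

definition sf_inverse :: "'a \<Rightarrow> 'a" where
  "sf_inverse a = (SOME b. a * b = 1)"

lemma sf_right_inverse: "a \<noteq> 0 \<Longrightarrow> a * sf_inverse a = 1"
  unfolding sf_inverse_def by (rule someI_ex) (rule mult_inverse_ex)

lemma sf_left_inverse: "a \<noteq> 0 \<Longrightarrow> sf_inverse a * a = 1"
  using sf_right_inverse by (simp add: mult.commute)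

lemma sf_inverse_nonzero: "a \<noteq> 0 \<Longrightarrow> sf_inverse a \<noteq> 0"
  by (metis mult_zero_right sf_right_inverse zero_neq_one)

lemma sf_mult_right_cancel: "c \<noteq> 0 \<Longrightarrow> a * c = b * c \<Longrightarrow> a = b"
  by (metis mult.assoc mult_1_right sf_right_inverse)

text \<open>The geometric sum \<open>s = 1 + a + \<dots> + a\<^sup>n\<^sup>-\<^sup>1\<close> satisfies \<open>a * s = s\<close>, and \<open>s \<noteq> 0\<close>
  because \<open>K\<close> is zero-sum free.\<close>
lemma sf_root_of_unity_eq_1:
  assumes "a ^ n = 1" and "n > 0"
  shows "a = 1"
proof -
  define s where "s = (\<Sum>k<n. a ^ k)"
  obtain m where n: "n = Suc m" using \<open>n > 0\<close> by (cases n) auto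
  have "a * s = (\<Sum>k<n. a ^ Suc k)"
    by (simp add: s_def sum_distrib_left)
  also have "\<dots> = (\<Sum>k<m. a ^ Suc k) + a ^ n"
    by (simp add: n)
  also have "\<dots> = 1 + (\<Sum>k<m. a ^ Suc k)"
    using \<open>a ^ n = 1\<close> by (simp add: add.commute)
  also have "\<dots> = s"
    by (simp only: s_def n sum.lessThan_Suc_shift power_0)
  finally have "a * s = 1 * s" by simp
  moreover have "s \<noteq> 0"
    using \<open>n > 0\<close> by (auto simp: s_def sf_sum_eq_0_iff)
  ultimately show "a = 1" using sf_mult_right_cancel by blast
qed

end

section \<open>Monomial linear maps\<close>

lemma basis_elt_nonzero: "basis_elt i \<noteq> (\<lambda>_. 0 :: 'k::zero_neq_one)"
  by (auto simp: basis_elt_def fun_eq_iff)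

lemma vsmult_basis_elt_apply:
  "vsmult c (basis_elt j) k = (if k = j then c else (0 :: 'k::semiring_1))"
  by (simp add: vsmult_def basis_elt_def)

lemma vsmult_vsmult: "vsmult a (vsmult b v) = vsmult (a * b) (v :: 'i \<Rightarrow> 'k::semiring_1)"
  by (simp add: vsmult_def mult.assoc)

lemma vsmult_one [simp]: "vsmult 1 v = (v :: 'i \<Rightarrow> 'k::semiring_1)"
  by (simp add: vsmult_def)

lemma vsmult_basis_elt_eq_iff:
  fixes c c' :: "'k::semiring_1"
  assumes "c \<noteq> 0"
  shows "vsmult c (basis_elt j) = vsmult c' (basis_elt j') \<longleftrightarrow> j = j' \<and> c = c'"
proof
  assume "vsmult c (basis_elt j) = vsmult c' (basis_elt j')"
  then have "vsmult c (basis_elt j) j = vsmult c' (basis_elt j') j" by simp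
  then have "c = c' * basis_elt j' j"
    by (simp add: vsmult_def basis_elt_def)
  with \<open>c \<noteq> 0\<close> have "j = j'" by (auto simp: basis_elt_def split: if_splits)
  with \<open>c = c' * basis_elt j' j\<close> show "j = j' \<and> c = c'" by (simp add: basis_elt_def)
qed simp

lemma klinear_zero: "klinear L \<Longrightarrow> L (\<lambda>_. 0) = (\<lambda>_. 0)"
proof -
  assume "klinear L"
  then have "L (vsmult 0 (\<lambda>_. 0)) = vsmult 0 (L (\<lambda>_. 0))" by (simp add: klinear_def)
  then show ?thesis by (simp add: vsmult_def)
qed

lemma klinear_sum:
  assumes "klinear L" and "finite S"
  shows "L (\<lambda>k. \<Sum>j\<in>S. a j * u j k) = (\<lambda>k. \<Sum>j\<in>S. a j * L (u j) k)"
  using \<open>finite S\<close>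
proof (induction S rule: finite_induct)
  case empty
  then show ?case using klinear_zero[OF \<open>klinear L\<close>] by simp
next
  case (insert x S)
  have "(\<lambda>k. \<Sum>j\<in>insert x S. a j * u j k) =
      vadd (vsmult (a x) (u x)) (\<lambda>k. \<Sum>j\<in>S. a j * u j k)"
    using insert by (simp add: vadd_def vsmult_def)
  then show ?case
    using \<open>klinear L\<close> insert by (simp add: klinear_def vadd_def vsmult_def)
qed

lemma vec_eq_sum_basis_elt: "(v :: 'i::finite \<Rightarrow> 'k::semiring_1) = (\<lambda>k. \<Sum>j\<in>UNIV. v j * basis_elt j k)"
  by (simp add: basis_elt_def if_distrib cong: if_cong)

lemma klinear_apply:
  fixes L :: "('i::finite \<Rightarrow> 'k::semiring_1) \<Rightarrow> ('j \<Rightarrow> 'k)"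
  assumes "klinear L"
  shows "L v k = (\<Sum>j\<in>UNIV. v j * L (basis_elt j) k)"
  by (subst vec_eq_sum_basis_elt) (simp add: klinear_sum[OF assms])

text \<open>If \<open>L e\<^sub>i\<close> has a nonzero coordinate \<open>k\<close>, expanding \<open>e\<^sub>i = M (L e\<^sub>i)\<close> in the zero-sum free
  \<open>K\<close> shows \<open>M e\<^sub>k \<in> K e\<^sub>i\<close>; applying \<open>L\<close> gives \<open>e\<^sub>k \<in> K (L e\<^sub>i)\<close>.\<close>
lemma klinear_invertible_basis_elt_monomial:
  fixes L :: "('i \<Rightarrow> 'k::idem_semifield) \<Rightarrow> ('j::finite \<Rightarrow> 'k)"
  assumes lin: "klinear L" "klinear M"
    and inverse: "\<And>v. M (L v) = v" "\<And>v. L (M v) = v"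
  shows "\<exists>j c. c \<noteq> 0 \<and> L (basis_elt i) = vsmult c (basis_elt j)"
proof -
  have "L (basis_elt i) \<noteq> (\<lambda>_. 0)"
  proof
    assume "L (basis_elt i) = (\<lambda>_. 0)"
    then have "basis_elt i = (\<lambda>_. 0 :: 'k)"
      using inverse(1)[of "basis_elt i"] klinear_zero[OF lin(2)] by simp
    with basis_elt_nonzero[of i] show False by contradiction
  qed
  then obtain k where k: "L (basis_elt i) k \<noteq> 0" by auto
  have M_k_off_i: "M (basis_elt k) m = 0" if "m \<noteq> i" for m
  proof -
    have "(\<Sum>j\<in>UNIV. L (basis_elt i) j * M (basis_elt j) m) = M (L (basis_elt i)) m"
      by (rule klinear_apply[OF lin(2), symmetric])
    also have "\<dots> = basis_elt i m" by (simp add: inverse(1))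
    also have "\<dots> = 0" using \<open>m \<noteq> i\<close> by (simp add: basis_elt_def)
    finally have "L (basis_elt i) k * M (basis_elt k) m = 0"
      by (simp add: sf_sum_eq_0_iff)
    with k show ?thesis by simp
  qed
  define b where "b = M (basis_elt k) i"
  have M_k: "M (basis_elt k) = vsmult b (basis_elt i)"
  proof
    fix m
    show "M (basis_elt k) m = vsmult b (basis_elt i) m"
      using M_k_off_i[of m] by (cases "m = i") (simp_all add: b_def vsmult_def basis_elt_def)
  qed
  have e_k: "basis_elt k = vsmult b (L (basis_elt i))"
  proof -
    have "basis_elt k = L (M (basis_elt k))" by (simp only: inverse(2))
    also have "\<dots> = vsmult b (L (basis_elt i))"
      using lin(1) by (simp add: M_k klinear_def)
    finally show ?thesis .
  qed
  have "b \<noteq> 0"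
  proof
    assume "b = 0"
    then have "basis_elt k = (\<lambda>_. 0 :: 'k)" unfolding e_k by (simp add: vsmult_def)
    with basis_elt_nonzero[of k] show False by contradiction
  qed
  have "L (basis_elt i) = vsmult (sf_inverse b) (basis_elt k)"
    by (simp add: e_k vsmult_def mult.assoc[symmetric] sf_left_inverse[OF \<open>b \<noteq> 0\<close>])
  then show ?thesis
    using sf_inverse_nonzero[OF \<open>b \<noteq> 0\<close>] by blast
qed

section \<open>The congruence generated by \<open>g \<sim> g h\<close>\<close>

lemma group_alg_eq_sum_basis_elt:
  fixes f :: "'g \<Rightarrow> 'k::semiring_1"
  assumes "finite (carrier G)" and "f \<in> group_alg G"
  shows "f = (\<lambda>x. \<Sum>g\<in>carrier G. f g * basis_elt g x)"
proof
  fix x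
  show "f x = (\<Sum>g\<in>carrier G. f g * basis_elt g x)"
    using assms by (cases "x \<in> carrier G")
      (simp_all add: group_alg_def basis_elt_def if_distrib cong: if_cong)
qed

lemma coset_cong_in_group_alg:
  assumes "coset_cong G H f f'" and "group G" and "H \<subseteq> carrier G"
  shows "f \<in> group_alg G" "f' \<in> group_alg G"
  using assms(1)
proof (induction rule: coset_cong.induct)
  case (gen g h)
  then have "g \<otimes>\<^bsub>G\<^esub> h \<in> carrier G"
    using assms(2,3) by (meson group.is_monoid monoid.m_closed subsetD)
  with gen show "basis_elt g \<in> group_alg G" "basis_elt (g \<otimes>\<^bsub>G\<^esub> h) \<in> group_alg G"
    by (auto simp: group_alg_def basis_elt_def)
qed (auto simp: group_alg_def vadd_def vsmult_def reg_act_def)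

lemma coset_cong_vadd:
  assumes "coset_cong G H a a'" "coset_cong G H b b'" and "group G" and "H \<subseteq> carrier G"
  shows "coset_cong G H (vadd a b) (vadd a' b')"
proof -
  have first: "coset_cong G H (vadd a b) (vadd a' b)"
    using assms coset_cong.add coset_cong_in_group_alg by metis
  have "coset_cong G H (vadd b a') (vadd b' a')"
    using assms coset_cong.add coset_cong_in_group_alg by metis
  then have "coset_cong G H (vadd a' b) (vadd a' b')"
    by (simp add: vadd_def add.commute)
  with first show ?thesis by (rule coset_cong.trans)
qed

lemma coset_cong_lincomb:
  fixes c :: "'x \<Rightarrow> 'k::semiring_1"
  assumes "finite S" and "\<And>g. g \<in> S \<Longrightarrow> coset_cong G H (a g) (b g)"
    and "group G" and "H \<subseteq> carrier G"
  shows "coset_cong G H (\<lambda>x. \<Sum>g\<in>S. c g * a g x) (\<lambda>x. \<Sum>g\<in>S. c g * b g x)"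
  using assms(1,2)
proof (induction S rule: finite_induct)
  case empty
  have "(\<lambda>_. 0 :: 'k) \<in> group_alg G" by (simp add: group_alg_def)
  then show ?case by (simp add: coset_cong.refl)
next
  case (insert y S)
  have "coset_cong G H (vadd (vsmult (c y) (a y)) (\<lambda>x. \<Sum>g\<in>S. c g * a g x))
                        (vadd (vsmult (c y) (b y)) (\<lambda>x. \<Sum>g\<in>S. c g * b g x))"
    using insert assms(3,4) by (simp add: coset_cong_vadd coset_cong.smult)
  with insert show ?case by (simp add: vadd_def vsmult_def)
qed

section \<open>Monomial representations\<close>

definition coord_subspace :: "'n set \<Rightarrow> ('n \<Rightarrow> 'k::zero) set" where
  "coord_subspace S = {v. \<forall>k. k \<notin> S \<longrightarrow> v k = 0}"

lemma coord_subspace_split_not_indecomposable: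
  fixes \<rho> :: "'g \<Rightarrow> ('n::finite \<Rightarrow> 'k::semiring_1) \<Rightarrow> ('n \<Rightarrow> 'k)"
  assumes "S \<noteq> {}" and "S \<noteq> UNIV"
    and "G_stable G \<rho> (coord_subspace S)" and "G_stable G \<rho> (coord_subspace (- S))"
  shows "\<not> indecomposable G \<rho>"
proof -
  have submodule: "is_submodule (coord_subspace T :: ('n \<Rightarrow> 'k) set)" for T :: "'n set"
    by (simp add: is_submodule_def coord_subspace_def vadd_def vsmult_def)
  have nonzero: "coord_subspace T \<noteq> {\<lambda>_. 0 :: 'k}" if "i \<in> T" for T and i :: 'n
  proof -
    have "basis_elt i \<in> (coord_subspace T :: ('n \<Rightarrow> 'k) set)"
      using \<open>i \<in> T\<close> by (auto simp: coord_subspace_def basis_elt_def)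
    moreover have "basis_elt i \<noteq> (\<lambda>_. 0 :: 'k)" by (rule basis_elt_nonzero)
    ultimately show ?thesis by auto
  qed
  obtain i j where "i \<in> S" "j \<in> - S" using assms(1,2) by blast
  then have nonzero_S:
      "coord_subspace S \<noteq> {\<lambda>_. 0 :: 'k}" "coord_subspace (- S) \<noteq> {\<lambda>_. 0 :: 'k}"
    by (simp_all add: nonzero)
  have split: "\<exists>u\<in>coord_subspace S. \<exists>w\<in>coord_subspace (- S). v = vadd u w" for v :: "'n \<Rightarrow> 'k"
  proof (intro bexI)
    show "v = vadd (\<lambda>k. if k \<in> S then v k else 0) (\<lambda>k. if k \<in> S then 0 else v k)"
      by (simp add: vadd_def fun_eq_iff)
  qed (simp_all add: coord_subspace_def)
  have unique: "u = u' \<and> w = w'"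
    if "u \<in> coord_subspace S" "u' \<in> coord_subspace S"
      "w \<in> coord_subspace (- S)" "w' \<in> coord_subspace (- S)" "vadd u w = vadd u' w'"
    for u u' w w' :: "'n \<Rightarrow> 'k"
  proof -
    have "u k + w k = u' k + w' k" for k
      using \<open>vadd u w = vadd u' w'\<close> by (simp add: vadd_def fun_eq_iff)
    then show ?thesis
      using that(1-4) by (auto simp: coord_subspace_def fun_eq_iff) (metis add_0 add_0_right)+
  qed
  show ?thesis
    using assms(3,4) submodule nonzero_S split unique unfolding indecomposable_def by blast
qed

locale semifield_rep = group G for G :: "('g, 'b) monoid_scheme" (structure) +
  fixes \<rho> :: "'g \<Rightarrow> ('n::finite \<Rightarrow> 'k::idem_semifield) \<Rightarrow> ('n \<Rightarrow> 'k)"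
  assumes finite_carrier: "finite (carrier G)"
    and is_rep: "is_rep G \<rho>"
begin

lemma rep_klinear: "g \<in> carrier G \<Longrightarrow> klinear (\<rho> g)"
  using is_rep by (simp add: is_rep_def)

lemma rep_one [simp]: "\<rho> \<one> v = v"
  using is_rep by (simp add: is_rep_def)

lemma rep_mult: "g \<in> carrier G \<Longrightarrow> h \<in> carrier G \<Longrightarrow> \<rho> (g \<otimes> h) v = \<rho> g (\<rho> h v)"
  using is_rep by (simp add: is_rep_def)

lemma rep_inv_left [simp]: "g \<in> carrier G \<Longrightarrow> \<rho> (inv g) (\<rho> g v) = v"
  by (metis inv_closed l_inv rep_mult rep_one)

lemma rep_inv_right [simp]: "g \<in> carrier G \<Longrightarrow> \<rho> g (\<rho> (inv g) v) = v"
  by (metis inv_closed r_inv rep_mult rep_one)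

lemma rep_vsmult: "g \<in> carrier G \<Longrightarrow> \<rho> g (vsmult c v) = vsmult c (\<rho> g v)"
  using rep_klinear by (simp add: klinear_def)

definition basis_perm :: "'g \<Rightarrow> 'n \<Rightarrow> 'n" where
  "basis_perm g i = (SOME j. \<rho> g (basis_elt i) j \<noteq> 0)"

definition basis_coeff :: "'g \<Rightarrow> 'n \<Rightarrow> 'k" where
  "basis_coeff g i = \<rho> g (basis_elt i) (basis_perm g i)"

lemma rep_basis_elt:
  assumes "g \<in> carrier G"
  shows "\<rho> g (basis_elt i) = vsmult (basis_coeff g i) (basis_elt (basis_perm g i))"
    and "basis_coeff g i \<noteq> 0"
proof -
  obtain j c where "c \<noteq> 0" and j: "\<rho> g (basis_elt i) = vsmult c (basis_elt j)"
    using klinear_invertible_basis_elt_monomial[OF rep_klinear rep_klinear]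
      assms inv_closed rep_inv_left rep_inv_right by metis
  then have apply_j: "\<rho> g (basis_elt i) k = (if k = j then c else 0)" for k
    by (simp add: vsmult_def basis_elt_def)
  then have "\<rho> g (basis_elt i) (basis_perm g i) \<noteq> 0"
    unfolding basis_perm_def using \<open>c \<noteq> 0\<close> by (metis (mono_tags) someI)
  then have "basis_perm g i = j" by (simp add: apply_j split: if_splits)
  then show "\<rho> g (basis_elt i) = vsmult (basis_coeff g i) (basis_elt (basis_perm g i))"
    and "basis_coeff g i \<noteq> 0"
    using \<open>c \<noteq> 0\<close> by (simp_all add: j basis_coeff_def vsmult_basis_elt_apply)
qed

lemma rep_basis_elt_apply:
  "g \<in> carrier G \<Longrightarrow>
    \<rho> g (basis_elt i) k = (if k = basis_perm g i then basis_coeff g i else 0)"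
  by (simp add: rep_basis_elt(1) vsmult_basis_elt_apply)

lemma basis_perm_one [simp]: "basis_perm \<one> i = i"
proof -
  have "vsmult 1 (basis_elt i) = vsmult (basis_coeff \<one> i) (basis_elt (basis_perm \<one> i))"
    using rep_basis_elt(1)[of \<one> i] by simp
  then show ?thesis
    using vsmult_basis_elt_eq_iff[of 1 i "basis_coeff \<one> i" "basis_perm \<one> i"] by simp
qed

lemma basis_perm_mult:
  assumes "g \<in> carrier G" and "h \<in> carrier G"
  shows "basis_perm (g \<otimes> h) i = basis_perm g (basis_perm h i)"
proof -
  have "vsmult (basis_coeff (g \<otimes> h) i) (basis_elt (basis_perm (g \<otimes> h) i)) =
      \<rho> g (\<rho> h (basis_elt i))"
    using assms by (simp add: rep_basis_elt(1)[symmetric] rep_mult)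
  also have "\<dots> = vsmult (basis_coeff h i * basis_coeff g (basis_perm h i))
      (basis_elt (basis_perm g (basis_perm h i)))"
    using assms by (simp add: rep_basis_elt(1) rep_vsmult vsmult_vsmult)
  finally show ?thesis
    using assms rep_basis_elt(2) by (simp add: vsmult_basis_elt_eq_iff)
qed

lemma basis_perm_inv: "g \<in> carrier G \<Longrightarrow> basis_perm (inv g) (basis_perm g i) = i"
  by (metis basis_perm_mult basis_perm_one inv_closed l_inv)

lemma rep_eigenvector_pow:
  assumes "h \<in> carrier G" and "\<rho> h v = vsmult c v"
  shows "\<rho> (h [^] n) v = vsmult (c ^ n) v"
proof (induction n)
  case 0
  then show ?case by simp
next
  case (Suc n)
  have "\<rho> (h [^] Suc n) v = \<rho> (h [^] n) (vsmult c v)"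
    using assms by (simp add: rep_mult)
  also have "\<dots> = vsmult (c ^ Suc n) v"
    using assms(1) Suc by (simp add: rep_vsmult vsmult_vsmult mult.commute)
  finally show ?case .
qed

lemma rep_eigenvalue_eq_1:
  assumes "h \<in> carrier G" and "\<rho> h v = vsmult c v" and "v k \<noteq> 0"
  shows "c = 1"
proof -
  have "v = \<rho> (h [^] ord h) v" using assms(1) by simp
  also have "\<dots> = vsmult (c ^ ord h) v" by (rule rep_eigenvector_pow[OF assms(1,2)])
  finally have "v = vsmult (c ^ ord h) v" .
  then have "c ^ ord h * v k = 1 * v k" by (metis vsmult_def mult_1_left)
  then have "c ^ ord h = 1" using sf_mult_right_cancel \<open>v k \<noteq> 0\<close> by blast
  moreover have "ord h > 0" using ord_ge_1[OF finite_carrier assms(1)] by simp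
  ultimately show ?thesis by (rule sf_root_of_unity_eq_1)
qed

lemma rep_fixes_basis_elt:
  assumes "h \<in> carrier G" and "basis_perm h i = i"
  shows "\<rho> h (basis_elt i) = basis_elt i"
proof -
  have eigen: "\<rho> h (basis_elt i) = vsmult (basis_coeff h i) (basis_elt i)"
    using rep_basis_elt(1)[OF assms(1)] assms(2) by simp
  have "basis_coeff h i = 1"
    by (rule rep_eigenvalue_eq_1[OF assms(1) eigen, of i]) (simp add: basis_elt_def)
  with eigen show ?thesis by simp
qed

lemma coord_subspace_G_stable:
  assumes invariant: "\<And>g i. g \<in> carrier G \<Longrightarrow> i \<in> S \<Longrightarrow> basis_perm g i \<in> S"
  shows "G_stable G \<rho> (coord_subspace S)"
  unfolding G_stable_def
proof (intro ballI)
  fix g and v :: "'n \<Rightarrow> 'k"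
  assume "g \<in> carrier G" and v: "v \<in> coord_subspace S"
  have "\<rho> g v k = 0" if "k \<notin> S" for k
  proof -
    have "\<rho> g v k = (\<Sum>j\<in>UNIV. v j * \<rho> g (basis_elt j) k)"
      by (rule klinear_apply[OF rep_klinear[OF \<open>g \<in> carrier G\<close>]])
    also have "\<dots> = 0"
      using v invariant[OF \<open>g \<in> carrier G\<close>] \<open>k \<notin> S\<close> \<open>g \<in> carrier G\<close>
      by (intro sum.neutral) (auto simp: coord_subspace_def rep_basis_elt_apply)
    finally show ?thesis .
  qed
  then show "\<rho> g v \<in> coord_subspace S" by (simp add: coord_subspace_def)
qed

lemma basis_perm_transitive:
  assumes "indecomposable G \<rho>"
  shows "\<exists>g\<in>carrier G. basis_perm g i = j"
proof (rule ccontr)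
  define orbit where "orbit = (\<lambda>g. basis_perm g i) ` carrier G"
  assume "\<not> (\<exists>g\<in>carrier G. basis_perm g i = j)"
  then have "j \<notin> orbit" by (auto simp: orbit_def)
  then have "orbit \<noteq> UNIV" by blast
  moreover have "orbit \<noteq> {}" by (auto simp: orbit_def)
  moreover have "G_stable G \<rho> (coord_subspace orbit)"
    by (rule coord_subspace_G_stable) (auto simp: orbit_def basis_perm_mult[symmetric])
  moreover have "G_stable G \<rho> (coord_subspace (- orbit))"
  proof (rule coord_subspace_G_stable)
    fix x k
    assume "x \<in> carrier G" and "k \<in> - orbit"
    show "basis_perm x k \<in> - orbit"
    proof
      assume "basis_perm x k \<in> orbit"
      then obtain g where "g \<in> carrier G" "basis_perm x k = basis_perm g i"
        by (auto simp: orbit_def)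
      then have "k = basis_perm (inv x \<otimes> g) i"
        using \<open>x \<in> carrier G\<close> by (metis basis_perm_inv basis_perm_mult inv_closed)
      then show False
        using \<open>k \<in> - orbit\<close> \<open>x \<in> carrier G\<close> \<open>g \<in> carrier G\<close> by (auto simp: orbit_def)
    qed
  qed
  ultimately show False
    using coord_subspace_split_not_indecomposable assms by blast
qed

end

section \<open>Transitive monomial representations\<close>

locale transitive_semifield_rep = semifield_rep G \<rho>
  for G :: "('g, 'b) monoid_scheme" (structure)
    and \<rho> :: "'g \<Rightarrow> ('n::finite \<Rightarrow> 'k::idem_semifield) \<Rightarrow> ('n \<Rightarrow> 'k)" +
  fixes i0 :: 'n
  assumes transitive: "\<And>j. \<exists>g\<in>carrier G. basis_perm g i0 = j"
begin

definition base_stabilizer :: "'g set" where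
  "base_stabilizer = {h \<in> carrier G. \<rho> h (basis_elt i0) = basis_elt i0}"

definition transversal :: "'n \<Rightarrow> 'g" where
  "transversal j = (SOME g. g \<in> carrier G \<and> basis_perm g i0 = j)"

definition base_map :: "('g \<Rightarrow> 'k) \<Rightarrow> ('n \<Rightarrow> 'k)" where
  "base_map f = (\<lambda>k. \<Sum>g\<in>carrier G. f g * \<rho> g (basis_elt i0) k)"

definition normal_form :: "('g \<Rightarrow> 'k) \<Rightarrow> ('g \<Rightarrow> 'k)" where
  "normal_form f = (\<lambda>x. \<Sum>g\<in>carrier G. f g * basis_elt (transversal (basis_perm g i0)) x)"

lemma subgroup_base_stabilizer: "subgroup base_stabilizer G"
proof (rule subgroupI)
  show "base_stabilizer \<subseteq> carrier G" "base_stabilizer \<noteq> {}"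
    by (auto simp: base_stabilizer_def)
next
  fix h assume "h \<in> base_stabilizer"
  then show "inv h \<in> base_stabilizer"
    using rep_inv_left[of h "basis_elt i0"] by (auto simp: base_stabilizer_def)
next
  fix h h' assume "h \<in> base_stabilizer" "h' \<in> base_stabilizer"
  then show "h \<otimes> h' \<in> base_stabilizer" by (auto simp: base_stabilizer_def rep_mult)
qed

lemma transversal: "transversal j \<in> carrier G" "basis_perm (transversal j) i0 = j"
proof -
  have "\<exists>g. g \<in> carrier G \<and> basis_perm g i0 = j" using transitive by blast
  then have "transversal j \<in> carrier G \<and> basis_perm (transversal j) i0 = j"
    unfolding transversal_def by (rule someI_ex)
  then show "transversal j \<in> carrier G" "basis_perm (transversal j) i0 = j" by auto
qed

lemma range_transversal_iff: "g \<in> range transversal \<longleftrightarrow> transversal (basis_perm g i0) = g"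
proof
  assume "g \<in> range transversal"
  then show "transversal (basis_perm g i0) = g" by (auto simp: transversal(2))
next
  assume "transversal (basis_perm g i0) = g"
  then show "g \<in> range transversal" by (rule range_eqI[OF HOL.sym])
qed

lemma inv_mult_in_base_stabilizer:
  assumes "g \<in> carrier G" "g' \<in> carrier G" and "basis_perm g i0 = basis_perm g' i0"
  shows "inv g \<otimes> g' \<in> base_stabilizer"
proof -
  have "basis_perm (inv g \<otimes> g') i0 = i0"
    using assms by (metis basis_perm_inv basis_perm_mult inv_closed)
  then show ?thesis
    using assms by (simp add: base_stabilizer_def rep_fixes_basis_elt)
qed

lemma klinear_base_map: "klinear base_map"
  by (simp add: klinear_def base_map_def vadd_def vsmult_def
      distrib_right sum.distrib sum_distrib_left mult.assoc)

lemma base_map_basis_elt: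
  assumes "g \<in> carrier G"
  shows "base_map (basis_elt g) = \<rho> g (basis_elt i0)"
proof
  fix k
  have "base_map (basis_elt g) k = (\<Sum>x\<in>carrier G. if x = g then \<rho> g (basis_elt i0) k else 0)"
    unfolding base_map_def by (rule sum.cong) (simp_all add: basis_elt_def)
  then show "base_map (basis_elt g) k = \<rho> g (basis_elt i0) k"
    using assms finite_carrier by simp
qed

lemma base_map_reg_act:
  assumes "x \<in> carrier G"
  shows "base_map (reg_act G x f) = \<rho> x (base_map f)"
proof
  fix k
  have translate: "(\<Sum>g\<in>carrier G. F g) = (\<Sum>g\<in>carrier G. F (x \<otimes> g))" for F :: "'g \<Rightarrow> 'k"
    using sum.reindex[OF inj_on_cmult[OF assms], of F] surj_const_mult[OF assms]
    by (simp add: comp_def)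
  have "base_map (reg_act G x f) k = (\<Sum>g\<in>carrier G. f (inv x \<otimes> g) * \<rho> g (basis_elt i0) k)"
    by (simp add: base_map_def reg_act_def)
  also have "\<dots> = (\<Sum>g\<in>carrier G. f g * \<rho> (x \<otimes> g) (basis_elt i0) k)"
    using assms by (subst translate) (simp add: m_assoc[symmetric])
  also have "\<dots> = \<rho> x (base_map f) k"
    using assms by (simp add: base_map_def klinear_sum[OF rep_klinear] finite_carrier rep_mult)
  finally show "base_map (reg_act G x f) k = \<rho> x (base_map f) k" .
qed

lemma base_map_respects_coset_cong:
  "coset_cong G base_stabilizer f f' \<Longrightarrow> base_map f = base_map f'"
proof (induction rule: coset_cong.induct)
  case (gen g h)
  then have "h \<in> carrier G" "\<rho> h (basis_elt i0) = basis_elt i0"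
    by (auto simp: base_stabilizer_def)
  with gen show ?case by (simp add: base_map_basis_elt rep_mult)
next
  case (add f f' e)
  then show ?case using klinear_base_map by (simp add: klinear_def)
next
  case (smult f f' c)
  then show ?case using klinear_base_map by (simp add: klinear_def)
next
  case (act f f' g)
  then show ?case by (simp add: base_map_reg_act)
qed simp_all

lemma coset_cong_normal_form:
  assumes "f \<in> group_alg G"
  shows "coset_cong G base_stabilizer f (normal_form f)"
proof -
  have "coset_cong G base_stabilizer (basis_elt g) (basis_elt (transversal (basis_perm g i0)))"
    if "g \<in> carrier G" for g
  proof -
    define t where "t = transversal (basis_perm g i0)"
    have "t \<in> carrier G" "inv t \<otimes> g \<in> base_stabilizer"
      using that transversal by (simp_all add: t_def inv_mult_in_base_stabilizer)
    then have "coset_cong G base_stabilizer (basis_elt t) (basis_elt (t \<otimes> (inv t \<otimes> g)))"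
      by (rule coset_cong.gen)
    then have "coset_cong G base_stabilizer (basis_elt t) (basis_elt g)"
      using \<open>t \<in> carrier G\<close> that by (simp add: m_assoc[symmetric])
    then show ?thesis unfolding t_def by (rule coset_cong.sym)
  qed
  then have "coset_cong G base_stabilizer (\<lambda>x. \<Sum>g\<in>carrier G. f g * basis_elt g x) (normal_form f)"
    unfolding normal_form_def
    using finite_carrier is_group subgroup.subset[OF subgroup_base_stabilizer]
    by (intro coset_cong_lincomb) simp_all
  then show ?thesis
    using group_alg_eq_sum_basis_elt[OF finite_carrier assms] by simp
qed

lemma normal_form_supported: "x \<notin> range transversal \<Longrightarrow> normal_form f x = 0"
  by (auto simp: normal_form_def basis_elt_def intro!: sum.neutral)

lemma base_map_transversal_supported:
  assumes "\<And>x. x \<notin> range transversal \<Longrightarrow> f x = 0"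
  shows "base_map f k = f (transversal k) * basis_coeff (transversal k) i0"
proof -
  have "f g * \<rho> g (basis_elt i0) k =
      (if g = transversal k then f (transversal k) * basis_coeff (transversal k) i0 else 0)"
    if "g \<in> carrier G" for g
    using that assms[of g] transversal by (auto simp: rep_basis_elt_apply range_transversal_iff)
  then show ?thesis
    using transversal(1) by (simp add: base_map_def finite_carrier cong: sum.cong)
qed

lemma base_map_inj_on_transversal_supported:
  assumes "\<And>x. x \<notin> range transversal \<Longrightarrow> f x = 0"
    and "\<And>x. x \<notin> range transversal \<Longrightarrow> f' x = 0"
    and "base_map f = base_map f'"
  shows "f = f'"
proof
  fix x
  show "f x = f' x"
  proof (cases "x \<in> range transversal")
    case True
    then obtain k where "x = transversal k" by blast
    moreover have "f (transversal k) * basis_coeff (transversal k) i0 =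
        f' (transversal k) * basis_coeff (transversal k) i0"
      using assms base_map_transversal_supported by metis
    ultimately show ?thesis
      using rep_basis_elt(2) transversal(1) sf_mult_right_cancel by blast
  qed (simp add: assms)
qed

lemma base_map_eq_imp_coset_cong:
  assumes "f \<in> group_alg G" "f' \<in> group_alg G" and "base_map f = base_map f'"
  shows "coset_cong G base_stabilizer f f'"
proof -
  have "normal_form f = normal_form f'"
    using assms coset_cong_normal_form base_map_respects_coset_cong normal_form_supported
    by (intro base_map_inj_on_transversal_supported) metis+
  then show ?thesis
    using coset_cong_normal_form[OF assms(1)] coset_cong_normal_form[OF assms(2)]
    by (metis coset_cong.sym coset_cong.trans)
qed

lemma base_map_surj: "base_map ` group_alg G = UNIV"
proof -
  have "v \<in> base_map ` group_alg G" for v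
  proof
    define u where
      "u k = vsmult (sf_inverse (basis_coeff (transversal k) i0)) (basis_elt (transversal k))" for k
    have "base_map (u k) = basis_elt k" for k
      using klinear_base_map transversal rep_basis_elt(1)
        sf_left_inverse[OF rep_basis_elt(2)[OF transversal(1)]]
      by (simp add: u_def klinear_def base_map_basis_elt vsmult_vsmult)
    then show "v = base_map (\<lambda>x. \<Sum>k\<in>UNIV. v k * u k x)"
      by (simp add: klinear_sum[OF klinear_base_map] vec_eq_sum_basis_elt[symmetric])
    show "(\<lambda>x. \<Sum>k\<in>UNIV. v k * u k x) \<in> group_alg G"
      using transversal(1)
      by (auto simp: group_alg_def u_def vsmult_def basis_elt_def intro!: sum.neutral)
  qed
  then show ?thesis by blast
qed

end

theorem lemma3p17:
  fixes G :: "('g, 'b) monoid_scheme"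
    and \<rho> :: "'g \<Rightarrow> ('n::finite \<Rightarrow> 'k::idem_semifield) \<Rightarrow> ('n \<Rightarrow> 'k)"
  assumes "group G" and "finite (carrier G)"
    and "is_rep G \<rho>" and "indecomposable G \<rho>"
  shows "\<exists>H. subgroup H G \<and>
           (\<exists>\<phi> :: ('g \<Rightarrow> 'k) \<Rightarrow> ('n \<Rightarrow> 'k).
              (\<forall>f\<in>group_alg G. \<forall>f'\<in>group_alg G. \<phi> (vadd f f') = vadd (\<phi> f) (\<phi> f')) \<and>
              (\<forall>c. \<forall>f\<in>group_alg G. \<phi> (vsmult c f) = vsmult c (\<phi> f)) \<and>
              (\<forall>g\<in>carrier G. \<forall>f\<in>group_alg G. \<phi> (reg_act G g f) = \<rho> g (\<phi> f)) \<and>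
              \<phi> ` group_alg G = UNIV \<and>
              (\<forall>f\<in>group_alg G. \<forall>f'\<in>group_alg G. \<phi> f = \<phi> f' \<longleftrightarrow> coset_cong G H f f'))"
proof -
  interpret semifield_rep G \<rho>
    using assms(1-3) by (simp add: semifield_rep_def semifield_rep_axioms_def)
  interpret transitive_semifield_rep G \<rho> undefined
    \<comment> \<open>any index serves as base point\<close>
    using basis_perm_transitive[OF assms(4)] by unfold_locales
  show ?thesis
  proof (intro exI[of _ base_stabilizer] exI[of _ base_map] conjI ballI allI)
    fix f f' :: "'g \<Rightarrow> 'k"
    assume "f \<in> group_alg G" "f' \<in> group_alg G"
    then show "base_map f = base_map f' \<longleftrightarrow> coset_cong G base_stabilizer f f'"
      using base_map_eq_imp_coset_cong base_map_respects_coset_cong by blast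
  qed (use subgroup_base_stabilizer klinear_base_map base_map_reg_act base_map_surj
         in \<open>simp_all add: klinear_def\<close>)
qed

end
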